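(* Let $\alpha>2$, let $K>0$ be a constant not depending on $\beta$, and let $\beta_{\min}>0$. Consider maximizing over $\beta\ge\beta_{\min}$ the (reduced) area spectral efficiency $$\mathcal{A}(\beta)=\ln(1+\beta)\,\beta^{-2/\alpha}\exp\left(-K\beta^{2/\alpha}\right).$$ Then the optimal decoding target is $\beta^*=\max(\beta_0,\beta_{\min})$, where $\beta_0>0$ satisfies $$-2K\beta_0^{2/\alpha}\ln(1+\beta_0)+\frac{\alpha\beta_0}{1+\beta_0}-2\ln(1+\beta_0)=0.$$
   Context: In the paper, $K=\int_{[s-d]^+}^{\infty}c_0(y,s)\,dy$, where $d$ is the secondary TX–RX distance, $s>0$ is a constant (arising from a mean-value decomposition of the ASE integral) treated as independent of $\beta$, and $c_0(y,s)=\frac{2\lambda_1P_1d^{\alpha}y^{-\alpha+1}}{P_2+P_1d^{\alpha}y^{-\alpha}}\arccos\left(\frac{s^2-d^2-y^2}{2dy}\right)$ if $|s-d|<y\le s+d$ and $c_0(y,s)=\frac{2\pi\lambda_1P_1d^{\alpha}y^{-\alpha+1}}{P_2+P_1d^{\alpha}y^{-\alpha}}$ otherwise ($\lambda_1$ primary density, $P_1,P_2$ transmit powers). $\beta_{\min}$ is the minimum decoding target guaranteeing primary protection. The function $\mathcal{A}$ is the secondary area spectral efficiency after removing factors independent of $\beta$. *)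

theory Defs
  imports Complex_Main
begin

definition ASE :: "real \<Rightarrow> real \<Rightarrow> real \<Rightarrow> real" where
  "ASE \<alpha> K \<beta> = ln (1 + \<beta>) * \<beta> powr (- 2 / \<alpha>) * exp (- K * \<beta> powr (2 / \<alpha>))"

end

theory Submission
  imports Defs
begin

text \<open>The derivative of \<open>ASE \<alpha> K\<close> is a positive factor times
  \<open>h x = \<alpha> x / (1 + x) - 2 ln (1 + x) - 2 K x\<^sup>2\<^sup>/\<^sup>\<alpha> ln (1 + x)\<close>, the left-hand side of the
  optimality condition. Dividing \<open>h\<close> by \<open>ln (1 + x) > 0\<close> leaves
  \<open>\<alpha> x / ((1 + x) ln (1 + x)) - 2 - 2 K x\<^sup>2\<^sup>/\<^sup>\<alpha>\<close>, which is strictly decreasing because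
  \<open>(1 + x) ln (1 + x) / x\<close> is strictly increasing (its derivative is
  \<open>(x - ln (1 + x)) / x\<^sup>2 > 0\<close>). Hence \<open>h\<close> changes sign exactly once, at its root \<open>\<beta>\<^sub>0\<close>,
  so \<open>ASE \<alpha> K\<close> strictly increases up to \<open>\<beta>\<^sub>0\<close> and strictly decreases after it; on
  \<open>[\<beta>\<^sub>m\<^sub>i\<^sub>n, \<infinity>)\<close> the unique maximiser is therefore \<open>max \<beta>\<^sub>0 \<beta>\<^sub>m\<^sub>i\<^sub>n\<close>.\<close>

definition ASE_slope_sign :: "real \<Rightarrow> real \<Rightarrow> real \<Rightarrow> real" where
  "ASE_slope_sign \<alpha> K x =
     \<alpha> * x / (1 + x) - 2 * ln (1 + x) - 2 * K * x powr (2 / \<alpha>) * ln (1 + x)"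

lemma has_real_derivative_ASE:
  fixes \<alpha> K x :: real
  assumes "\<alpha> \<noteq> 0" "x > 0"
  shows "(ASE \<alpha> K has_real_derivative
     exp (- K * x powr (2 / \<alpha>)) * x powr (- 2 / \<alpha>) / (x * \<alpha>) * ASE_slope_sign \<alpha> K x) (at x)"
proof -
  define a where "a = 2 / \<alpha>"
  have a\<alpha>: "a * \<alpha> = 2" and neg_a: "- 2 / \<alpha> = - a"
    using assms by (simp_all add: a_def)
  define E where "E = exp (- K * x powr a)"
  have d_ln: "((\<lambda>x. ln (1 + x)) has_real_derivative 1 / (1 + x)) (at x)"
    using assms by (auto intro!: derivative_eq_intros)
  have d_powr: "((\<lambda>x. x powr (- a)) has_real_derivative - a * x powr (- a - 1)) (at x)"
    using has_real_derivative_powr[OF assms(2), of "- a"] by simp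
  have d_exp: "((\<lambda>x. exp (- K * x powr a)) has_real_derivative
      E * (- K * (a * x powr (a - 1)))) (at x)"
    unfolding E_def by (intro DERIV_fun_exp DERIV_cmult has_real_derivative_powr assms(2))
  have "(ASE \<alpha> K has_real_derivative
     (1 / (1 + x) * x powr (- a) + ln (1 + x) * (- a * x powr (- a - 1))) * E
     + ln (1 + x) * x powr (- a) * (E * (- K * (a * x powr (a - 1))))) (at x)"
    unfolding ASE_def neg_a a_def[symmetric] E_def
    using DERIV_mult[OF DERIV_mult[OF d_ln d_powr] d_exp] by (simp add: E_def mult_ac)
  moreover have "(1 / (1 + x) * x powr (- a) + ln (1 + x) * (- a * x powr (- a - 1))) * E
     + ln (1 + x) * x powr (- a) * (E * (- K * (a * x powr (a - 1))))
     = E * x powr (- a) / (x * \<alpha>) * ASE_slope_sign \<alpha> K x"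
  proof -
    have "x powr (- a - 1) = x powr (- a) / x" "x powr (a - 1) = x powr a / x"
      using assms by (simp_all add: powr_diff)
    moreover have "(1 / (1 + x) * P + l * (- a * (P / x))) * E + l * P * (E * (- K * (a * (Q / x))))
        = E * P / (x * \<alpha>) * (\<alpha> * x / (1 + x) - (a * \<alpha>) * l - (a * \<alpha>) * K * Q * l)"
      for P Q l
      using assms by (simp add: divide_simps) (simp add: algebra_simps)
    ultimately show ?thesis
      unfolding ASE_slope_sign_def a_def[symmetric] a\<alpha>[symmetric] by simp
  qed
  ultimately show ?thesis by (simp add: neg_a E_def a_def mult_ac)
qed

lemma one_plus_mult_ln_div_strict_mono:
  fixes x y :: real
  assumes "0 < x" "x < y"
  shows "(1 + x) * ln (1 + x) / x < (1 + y) * ln (1 + y) / y"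
proof (rule DERIV_pos_imp_increasing_open[OF assms(2)])
  fix z :: real
  assume "x < z" "z < y"
  then have "z > 0" using assms by simp
  have "((\<lambda>z. (1 + z) * ln (1 + z) / z) has_real_derivative
      ((1 * ln (1 + z) + (1 + z) * (1 / (1 + z))) * z - (1 + z) * ln (1 + z) * 1) / (z * z)) (at z)"
    using \<open>z > 0\<close> by (auto intro!: derivative_eq_intros)
  moreover have "((1 * ln (1 + z) + (1 + z) * (1 / (1 + z))) * z - (1 + z) * ln (1 + z) * 1) / (z * z)
      = (z - ln (1 + z)) / (z * z)"
    using \<open>z > 0\<close> by (simp add: field_simps)
  moreover have "(z - ln (1 + z)) / (z * z) > 0"
    using ln_add_one_self_less_self[OF \<open>z > 0\<close>] \<open>z > 0\<close> by simp
  ultimately show "\<exists>d. ((\<lambda>z. (1 + z) * ln (1 + z) / z) has_real_derivative d) (at z) \<and> d > 0"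
    by metis
next
  show "continuous_on {x..y} (\<lambda>z. (1 + z) * ln (1 + z) / z)"
    using assms by (intro continuous_at_imp_continuous_on ballI) (auto intro!: continuous_intros)
qed

lemma ASE_slope_sign_eq:
  fixes \<alpha> K x :: real
  assumes "x > 0"
  shows "ASE_slope_sign \<alpha> K x
    = ln (1 + x) * (\<alpha> * x / ((1 + x) * ln (1 + x)) - 2 - 2 * K * x powr (2 / \<alpha>))"
proof -
  have "ln (1 + x) > 0" using assms by simp
  then have "ln (1 + x) * (\<alpha> * x / ((1 + x) * ln (1 + x))) = \<alpha> * x / (1 + x)" by simp
  then show ?thesis by (simp add: ASE_slope_sign_def algebra_simps)
qed

lemma ASE_slope_sign_quotient_strict_antimono:
  fixes \<alpha> K x y :: real
  assumes "\<alpha> > 0" "K \<ge> 0" "0 < x" "x < y"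
  shows "\<alpha> * y / ((1 + y) * ln (1 + y)) - 2 - 2 * K * y powr (2 / \<alpha>)
       < \<alpha> * x / ((1 + x) * ln (1 + x)) - 2 - 2 * K * x powr (2 / \<alpha>)"
proof -
  have "ln (1 + x) > 0" "ln (1 + y) > 0" using assms by auto
  moreover have "(1 + x) * ln (1 + x) / x < (1 + y) * ln (1 + y) / y"
    using assms by (intro one_plus_mult_ln_div_strict_mono)
  ultimately have "y / ((1 + y) * ln (1 + y)) < x / ((1 + x) * ln (1 + x))"
    using assms by (simp add: divide_simps mult_ac)
  then have "\<alpha> * y / ((1 + y) * ln (1 + y)) < \<alpha> * x / ((1 + x) * ln (1 + x))"
    using assms by (simp add: divide_simps)
  moreover have "K * x powr (2 / \<alpha>) \<le> K * y powr (2 / \<alpha>)"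
    using assms by (intro mult_left_mono powr_mono2) auto
  ultimately show ?thesis by linarith
qed

lemma ASE_slope_sign_pos:
  fixes \<alpha> K \<beta>0 x :: real
  assumes "\<alpha> > 0" "K \<ge> 0" "ASE_slope_sign \<alpha> K \<beta>0 = 0" "0 < x" "x < \<beta>0"
  shows "ASE_slope_sign \<alpha> K x > 0"
  using ASE_slope_sign_quotient_strict_antimono[OF assms(1,2,4,5)] assms
    ASE_slope_sign_eq[of x \<alpha> K] ASE_slope_sign_eq[of \<beta>0 \<alpha> K]
  by simp

lemma ASE_slope_sign_neg:
  fixes \<alpha> K \<beta>0 x :: real
  assumes "\<alpha> > 0" "K \<ge> 0" "\<beta>0 > 0" "ASE_slope_sign \<alpha> K \<beta>0 = 0" "\<beta>0 < x"
  shows "ASE_slope_sign \<alpha> K x < 0"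
  using ASE_slope_sign_quotient_strict_antimono[OF assms(1-3,5)] assms
    ASE_slope_sign_eq[of x \<alpha> K] ASE_slope_sign_eq[of \<beta>0 \<alpha> K]
  by (simp add: mult_less_0_iff)

lemma DERIV_sign_change_imp_peak:
  fixes f f' :: "real \<Rightarrow> real" and b u v :: real
  assumes deriv: "\<And>x. x > 0 \<Longrightarrow> (f has_real_derivative f' x) (at x)"
    and pos: "\<And>x. 0 < x \<Longrightarrow> x < b \<Longrightarrow> f' x > 0"
    and neg: "\<And>x. b < x \<Longrightarrow> f' x < 0"
    and "0 < u" "u < v"
  shows "v \<le> b \<Longrightarrow> f u < f v"
    and "b \<le> u \<Longrightarrow> f v < f u"
proof -
  have cont: "continuous_on {u..v} f"
    using assms(4) by (intro continuous_at_imp_continuous_on ballI DERIV_isCont[OF deriv]) auto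
  show "v \<le> b \<Longrightarrow> f u < f v"
    using assms(4) by (intro DERIV_pos_imp_increasing_open[OF \<open>u < v\<close> _ cont])
      (metis deriv pos order.strict_trans order.strict_trans2)
  show "b \<le> u \<Longrightarrow> f v < f u"
    using assms(4) by (intro DERIV_neg_imp_decreasing_open[OF \<open>u < v\<close> _ cont])
      (metis deriv neg order.strict_trans order.strict_trans1)
qed

lemma ASE_peak:
  fixes \<alpha> K \<beta>0 u v :: real
  assumes "\<alpha> > 0" "K \<ge> 0" "\<beta>0 > 0" "ASE_slope_sign \<alpha> K \<beta>0 = 0" "0 < u" "u < v"
  shows "v \<le> \<beta>0 \<Longrightarrow> ASE \<alpha> K u < ASE \<alpha> K v"
    and "\<beta>0 \<le> u \<Longrightarrow> ASE \<alpha> K v < ASE \<alpha> K u"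
proof -
  have factor_pos: "exp (- K * x powr (2 / \<alpha>)) * x powr (- 2 / \<alpha>) / (x * \<alpha>) > 0"
    if "x > 0" for x
    using that assms(1) by simp
  note peak = DERIV_sign_change_imp_peak[where
      f' = "\<lambda>x. exp (- K * x powr (2 / \<alpha>)) * x powr (- 2 / \<alpha>) / (x * \<alpha>) * ASE_slope_sign \<alpha> K x",
      OF has_real_derivative_ASE _ _ assms(5,6)]
  show "v \<le> \<beta>0 \<Longrightarrow> ASE \<alpha> K u < ASE \<alpha> K v" and "\<beta>0 \<le> u \<Longrightarrow> ASE \<alpha> K v < ASE \<alpha> K u"
    using assms factor_pos ASE_slope_sign_pos[OF assms(1,2,4)] ASE_slope_sign_neg[OF assms(1-4)]
    by (auto intro!: peak mult_pos_pos mult_pos_neg)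
qed

theorem proposition3:
  fixes \<alpha> K \<beta>min \<beta>0 :: real
  assumes "\<alpha> > 2" and "K > 0" and "\<beta>min > 0" and "\<beta>0 > 0"
    and "- 2 * K * \<beta>0 powr (2 / \<alpha>) * ln (1 + \<beta>0) + \<alpha> * \<beta>0 / (1 + \<beta>0)
           - 2 * ln (1 + \<beta>0) = 0"
  shows "max \<beta>0 \<beta>min \<ge> \<beta>min \<and>
         (\<forall>\<beta>. \<beta> \<ge> \<beta>min \<longrightarrow> \<beta> \<noteq> max \<beta>0 \<beta>min \<longrightarrow>
              ASE \<alpha> K \<beta> < ASE \<alpha> K (max \<beta>0 \<beta>min))"
proof -
  have root: "ASE_slope_sign \<alpha> K \<beta>0 = 0"
    using assms(5) unfolding ASE_slope_sign_def by linarith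
  note peak = ASE_peak[of \<alpha> K \<beta>0, OF _ _ assms(4) root]
  have "ASE \<alpha> K \<beta> < ASE \<alpha> K (max \<beta>0 \<beta>min)"
    if "\<beta> \<ge> \<beta>min" "\<beta> \<noteq> max \<beta>0 \<beta>min" for \<beta>
  proof (cases "\<beta> < max \<beta>0 \<beta>min")
    case True
    then show ?thesis using that assms(1-3) peak(1)[of \<beta> \<beta>0] by (auto simp: max_def)
  next
    case False
    then show ?thesis using that assms(1-3) peak(2)[of "max \<beta>0 \<beta>min" \<beta>] by auto
  qed
  then show ?thesis by simp
qed

end
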